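(* Assume (P1** ): $\mathcal{X}\subseteq\mathbb{R}^d$; the target density $\pi$ is log-Lipschitz, i.e. $|\log\pi(z)-\log\pi(x)|\le L\|z-x\|$ for some $L>0$; for every $s\in(0,1)$, with $V=\pi^{-s}$ the marginal kernel satisfies $PV(x)\le\lambda V(x)+b\mathbb{1}_{\{x\in C\}}$ for some small set $C$ and constants $\lambda<1$, $b<\infty$; and the proposal is a random walk $q(x,dy)=q(\|y-x\|)dy$ with $\int_{\mathbb{R}^d}\exp\{a\|u\|\}q(\|u\|)du<\infty$ for some $a>0$. Assume also (W1): for every $\delta>0$, $\lim_{N\to\infty}\sup_{x\in\mathcal{X}}\mathbb{P}_{Q_{x,N}}[|W_{x,N}-1|\ge\delta]=0$. Then (P1* ) holds: there exist a function $V\ge 1$ (which can be taken of the form $V=\pi^{-s}$, $s\in(0,1)$), a small set $C$, constants $\lambda<1$, $b<\infty$ and $K<\infty$ such that $PV(x)\le\lambda V(x)+b\mathbb{1}_{\{x\in C\}}$ and $qV(x)\le KV(x)$ for all $x\in\mathcal{X}$.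
   Context: $\pi$ is a probability density on $\mathcal{X}\subseteq\mathbb{R}^d$ (with respect to Lebesgue measure); $\|\cdot\|$ is the Euclidean norm. For each $x\in\mathcal{X}$, $N\in\mathbb{N}^+$, $Q_{x,N}$ is a probability distribution on $[0,\infty)$ of a weight $W_{x,N}>0$ a.s. with $\mathbb{E}[W_{x,N}]=1$. The marginal Metropolis–Hastings kernel is $P(x,dy)=\alpha(x,y)q(x,dy)+\delta_x(dy)\rho(x)$, $\alpha(x,y)=\min\{1,\frac{\pi(y)q(y,dx)}{\pi(x)q(x,dy)}\}$, $\rho(x)=1-\int\alpha(x,y)q(x,dy)$. For a kernel $K'$, $K'V(x)=\int K'(x,dz)V(z)$. A set $C$ is small for $P$ if there are $n_0\in\mathbb{N}^+$, $\varepsilon>0$ and a probability measure $\nu$ with $P^{n_0}(x,\cdot)\ge\varepsilon\nu(\cdot)$ for $x\in C$. *)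

theory Defs
  imports "HOL-Probability.Probability"
begin

text \<open>State space X is a Lebesgue-measurable subset S of a Euclidean space 'a (= R^d).
  pi is the target density on S, qd x y the proposal density of q(x,dy) w.r.t. Lebesgue measure.
  Proposals leaving S are rejected (pi is taken to vanish outside S).\<close>

definition mh_alpha :: "('a \<Rightarrow> real) \<Rightarrow> ('a \<Rightarrow> 'a \<Rightarrow> real) \<Rightarrow> 'a \<Rightarrow> 'a \<Rightarrow> real" where
  "mh_alpha \<pi> qd x y = min 1 ((\<pi> y * qd y x) / (\<pi> x * qd x y))"

definition mh_rho :: "'a::euclidean_space set \<Rightarrow> ('a \<Rightarrow> real) \<Rightarrow> ('a \<Rightarrow> 'a \<Rightarrow> real) \<Rightarrow> 'a \<Rightarrow> ennreal" where
  "mh_rho S \<pi> qd x = 1 - (\<integral>\<^sup>+ y. ennreal (mh_alpha \<pi> qd x y * qd x y) * indicator S y \<partial>lborel)"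

definition mh_op :: "'a::euclidean_space set \<Rightarrow> ('a \<Rightarrow> real) \<Rightarrow> ('a \<Rightarrow> 'a \<Rightarrow> real)
    \<Rightarrow> ('a \<Rightarrow> ennreal) \<Rightarrow> 'a \<Rightarrow> ennreal" where
  "mh_op S \<pi> qd f x =
     (\<integral>\<^sup>+ y. ennreal (mh_alpha \<pi> qd x y * qd x y) * f y * indicator S y \<partial>lborel)
     + mh_rho S \<pi> qd x * f x"

definition prop_op :: "'a::euclidean_space set \<Rightarrow> ('a \<Rightarrow> 'a \<Rightarrow> real) \<Rightarrow> ('a \<Rightarrow> ennreal) \<Rightarrow> 'a \<Rightarrow> ennreal" where
  "prop_op S qd f x = (\<integral>\<^sup>+ y. ennreal (qd x y) * f y * indicator S y \<partial>lborel)"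

definition mh_small :: "'a::euclidean_space set \<Rightarrow> ('a \<Rightarrow> real) \<Rightarrow> ('a \<Rightarrow> 'a \<Rightarrow> real) \<Rightarrow> 'a set \<Rightarrow> bool" where
  "mh_small S \<pi> qd C \<longleftrightarrow> C \<subseteq> S \<and>
     (\<exists>n0::nat. n0 \<ge> 1 \<and> (\<exists>\<epsilon>::real. \<epsilon> > 0 \<and> (\<exists>\<nu>::'a measure. prob_space \<nu> \<and> sets \<nu> = sets lborel \<and>
        (\<forall>x\<in>C. \<forall>A\<in>sets lborel. ((mh_op S \<pi> qd ^^ n0) (indicator A)) x \<ge> ennreal \<epsilon> * emeasure \<nu> A))))"

end

theory Submission
  imports Defs
begin

text \<open>Take \<open>V = max 1 (k * pi^(-s))\<close> with \<open>s = min (1/2) (a/L)\<close>. Off the small set \<open>C\<close> the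
  drift inequality for \<open>pi^(-s)\<close> forces the acceptance probability to be at least \<open>1 - lambda\<close>;
  as the acceptance probability at \<open>x\<close> is at most \<open>T / pi x\<close> plus the mass of \<open>q\<close> above
  height \<open>T\<close>, the density \<open>pi\<close> is bounded off \<open>C\<close>. Hence \<open>k * pi^(-s)\<close> dominates the
  constant \<open>1\<close> there, and the drift survives the truncation at \<open>1\<close>. The bound \<open>qV \<le> K V\<close>
  follows from \<open>pi y^(-s) \<le> pi x^(-s) * exp (a |y - x|)\<close> (log-Lipschitz continuity) and the
  exponential moment of \<open>q\<close>.\<close>

lemma nn_integral_lborel_translate:
  fixes x :: "'a::euclidean_space" and h :: "'a \<Rightarrow> ennreal"
  assumes [measurable]: "h \<in> borel_measurable borel"
  shows "(\<integral>\<^sup>+ y. h (y - x) \<partial>lborel) = (\<integral>\<^sup>+ u. h u \<partial>lborel)"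
proof -
  have "(\<integral>\<^sup>+ u. h u \<partial>lborel) = (\<integral>\<^sup>+ u. h u \<partial>distr lborel borel ((+) (- x)))"
    by (simp add: lborel_distr_plus)
  also have "\<dots> = (\<integral>\<^sup>+ y. h (- x + y) \<partial>lborel)"
    by (simp add: nn_integral_distr)
  finally show ?thesis
    by simp
qed

lemma nn_integral_excess_small:
  fixes f :: "'a \<Rightarrow> real"
  assumes [measurable]: "f \<in> borel_measurable M"
    and finite: "(\<integral>\<^sup>+ u. ennreal (f u) \<partial>M) < \<infinity>"
    and "0 < e"
  shows "\<exists>T>0. (\<integral>\<^sup>+ u. ennreal (max 0 (f u - T)) \<partial>M) < e"
proof -
  define g where "g n u = ennreal (max 0 (f u - (real n + 1)))" for n u
  have "decseq g"
    unfolding g_def by (intro decseq_SucI le_funI ennreal_leI) simp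
  moreover have "\<And>n. g n \<in> borel_measurable M"
    unfolding g_def by measurable
  moreover have "(\<integral>\<^sup>+ u. g 0 u \<partial>M) \<le> (\<integral>\<^sup>+ u. ennreal (f u) \<partial>M)"
    unfolding g_def by (intro nn_integral_mono) (auto simp: max_def intro: ennreal_leI)
  then have "(\<integral>\<^sup>+ u. g 0 u \<partial>M) < \<infinity>"
    using finite by (rule le_less_trans)
  ultimately have "(\<integral>\<^sup>+ u. (INF n. g n u) \<partial>M) = (INF n. \<integral>\<^sup>+ u. g n u \<partial>M)"
    by (rule nn_integral_monotone_convergence_INF_decseq)
  moreover have "(INF n. g n u) = 0" for u
  proof -
    obtain n :: nat where "f u \<le> real n"
      using real_arch_simple by blast
    then have "g n u = 0"
      by (simp add: g_def)
    then show ?thesis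
      by (metis INF_lower UNIV_I le_zero_eq)
  qed
  ultimately have "(INF n. \<integral>\<^sup>+ u. g n u \<partial>M) = 0"
    by simp
  then obtain n where "(\<integral>\<^sup>+ u. g n u \<partial>M) < e"
    using \<open>0 < e\<close> by (metis INF_less_iff)
  then show ?thesis
    by (intro exI[of _ "real n + 1"]) (simp add: g_def)
qed

lemma min_ratio_mult_le:
  fixes p p' r T :: real
  assumes "0 < p" "0 < p'" "0 \<le> r" "0 < T"
  shows "min 1 ((p' * r) / (p * r)) * r \<le> T * (p' / p) + max 0 (r - T)"
proof (cases "r \<le> T")
  case True
  have "min 1 ((p' * r) / (p * r)) * r \<le> (p' / p) * r"
    using assms by (intro mult_right_mono) auto
  also have "\<dots> \<le> (p' / p) * T"
    using True assms by (intro mult_left_mono) auto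
  finally show ?thesis
    by (simp add: mult.commute)
next
  case False
  then have "min 1 ((p' * r) / (p * r)) * r = min 1 (p' / p) * T + min 1 (p' / p) * (r - T)"
    by (simp add: algebra_simps)
  also have "\<dots> \<le> (p' / p) * T + 1 * (r - T)"
    using False assms by (intro add_mono mult_right_mono) auto
  finally show ?thesis
    using False by (simp add: mult.commute)
qed

lemma powr_neg_le_of_ln_diff_le:
  fixes u v s D :: real
  assumes "0 < u" "0 < v" "ln u - ln v \<le> D" "0 \<le> s"
  shows "v powr - s \<le> u powr - s * exp (s * D)"
proof -
  have "- s * ln v \<le> - s * ln u + s * D"
    using mult_left_mono[OF assms(3,4)] by (simp add: algebra_simps)
  then have "exp (- s * ln v) \<le> exp (- s * ln u) * exp (s * D)"
    by (simp flip: exp_add)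
  with assms(1,2) show ?thesis
    by (simp add: powr_def)
qed

lemma ennreal_max_one_le:
  fixes k v :: real
  assumes "0 \<le> k" "0 \<le> v"
  shows "ennreal (max 1 (k * v)) \<le> 1 + ennreal k * ennreal v"
proof -
  have "ennreal (max 1 (k * v)) \<le> ennreal (1 + k * v)"
    using assms by (intro ennreal_leI) simp
  also have "\<dots> = 1 + ennreal k * ennreal v"
    using assms by (simp add: ennreal_mult)
  finally show ?thesis .
qed

lemma mh_op_mono:
  assumes "\<And>y. f y \<le> g y"
  shows "mh_op S \<pi> qd f x \<le> mh_op S \<pi> qd g x"
  unfolding mh_op_def
  by (intro add_mono nn_integral_mono mult_right_mono mult_left_mono assms) auto

lemma prop_op_mono:
  assumes "\<And>y. f y \<le> g y"
  shows "prop_op S qd f x \<le> prop_op S qd g x"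
  unfolding prop_op_def
  by (intro nn_integral_mono mult_right_mono mult_left_mono assms) auto

lemma mh_op_add_cmult:
  assumes [measurable]: "f \<in> borel_measurable borel" "g \<in> borel_measurable borel"
    "(\<lambda>y. ennreal (mh_alpha \<pi> qd x y * qd x y)) \<in> borel_measurable borel" "S \<in> sets borel"
  shows "mh_op S \<pi> qd (\<lambda>y. f y + c * g y) x = mh_op S \<pi> qd f x + c * mh_op S \<pi> qd g x"
proof -
  let ?a = "\<lambda>y. ennreal (mh_alpha \<pi> qd x y * qd x y) * indicator S y"
  have "(\<integral>\<^sup>+ y. ennreal (mh_alpha \<pi> qd x y * qd x y) * (f y + c * g y) * indicator S y \<partial>lborel)
      = (\<integral>\<^sup>+ y. ?a y * f y + c * (?a y * g y) \<partial>lborel)"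
    by (intro nn_integral_cong) (simp add: algebra_simps)
  also have "\<dots> = (\<integral>\<^sup>+ y. ?a y * f y \<partial>lborel) + c * (\<integral>\<^sup>+ y. ?a y * g y \<partial>lborel)"
    by (simp add: nn_integral_add nn_integral_cmult)
  finally show ?thesis
    unfolding mh_op_def by (simp add: algebra_simps)
qed

lemma prop_op_add_cmult:
  assumes [measurable]: "f \<in> borel_measurable borel" "g \<in> borel_measurable borel"
    "(\<lambda>y. ennreal (qd x y)) \<in> borel_measurable borel" "S \<in> sets borel"
  shows "prop_op S qd (\<lambda>y. f y + c * g y) x = prop_op S qd f x + c * prop_op S qd g x"
proof -
  let ?a = "\<lambda>y. ennreal (qd x y) * indicator S y"
  have "(\<integral>\<^sup>+ y. ennreal (qd x y) * (f y + c * g y) * indicator S y \<partial>lborel)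
      = (\<integral>\<^sup>+ y. ?a y * f y + c * (?a y * g y) \<partial>lborel)"
    by (intro nn_integral_cong) (simp add: algebra_simps)
  also have "\<dots> = (\<integral>\<^sup>+ y. ?a y * f y \<partial>lborel) + c * (\<integral>\<^sup>+ y. ?a y * g y \<partial>lborel)"
    by (simp add: nn_integral_add nn_integral_cmult)
  finally show ?thesis
    unfolding prop_op_def by (simp add: algebra_simps)
qed

lemma mh_rho_le_of_drift:
  assumes drift: "mh_op S \<pi> qd f x \<le> ennreal l * f x" and "0 < f x" "f x < \<infinity>"
  shows "mh_rho S \<pi> qd x \<le> ennreal l"
proof -
  have "f x * mh_rho S \<pi> qd x \<le> f x * ennreal l"
    using order_trans[OF _ drift] by (simp add: mh_op_def mult.commute)
  with assms(2,3) show ?thesis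
    by (simp add: ennreal_mult_le_mult_iff)
qed

locale random_walk_mh =
  fixes S :: "'a::euclidean_space set" and \<pi> :: "'a \<Rightarrow> real" and q :: "real \<Rightarrow> real"
  assumes S_meas [measurable]: "S \<in> sets borel"
    and pi_meas [measurable]: "\<pi> \<in> borel_measurable borel"
    and pi_pos: "\<And>x. x \<in> S \<Longrightarrow> 0 < \<pi> x"
    and pi_density: "(\<integral>\<^sup>+ x. ennreal (\<pi> x) * indicator S x \<partial>lborel) = 1"
    and q_nonneg: "\<And>r. 0 \<le> q r"
    and q_meas [measurable]: "q \<in> borel_measurable borel"
    and q_prob: "(\<integral>\<^sup>+ u. ennreal (q (norm u)) \<partial>(lborel :: 'a measure)) = 1"
begin

abbreviation proposal :: "'a \<Rightarrow> 'a \<Rightarrow> real" where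
  "proposal x y \<equiv> q (norm (y - x))"

abbreviation mh :: "('a \<Rightarrow> ennreal) \<Rightarrow> 'a \<Rightarrow> ennreal" where
  "mh \<equiv> mh_op S \<pi> proposal"

abbreviation proposal_op :: "('a \<Rightarrow> ennreal) \<Rightarrow> 'a \<Rightarrow> ennreal" where
  "proposal_op \<equiv> prop_op S proposal"

abbreviation acceptance :: "'a \<Rightarrow> ennreal" where
  "acceptance x \<equiv> \<integral>\<^sup>+ y. ennreal (mh_alpha \<pi> proposal x y * proposal x y) * indicator S y \<partial>lborel"

lemma acceptance_integrand_measurable [measurable]:
  "(\<lambda>y. ennreal (mh_alpha \<pi> proposal x y * proposal x y)) \<in> borel_measurable borel"
  unfolding mh_alpha_def by measurable

lemma proposal_integral: "(\<integral>\<^sup>+ y. ennreal (proposal x y) \<partial>lborel) = 1"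
  using nn_integral_lborel_translate[of "\<lambda>u. ennreal (q (norm u))" x] q_prob by simp

lemma acceptance_le_one: "acceptance x \<le> 1"
proof -
  have "acceptance x \<le> (\<integral>\<^sup>+ y. ennreal (proposal x y) \<partial>lborel)"
  proof (intro nn_integral_mono)
    fix y
    have "mh_alpha \<pi> proposal x y * proposal x y \<le> 1 * proposal x y"
      unfolding mh_alpha_def using q_nonneg by (intro mult_right_mono) auto
    then show "ennreal (mh_alpha \<pi> proposal x y * proposal x y) * indicator S y \<le> ennreal (proposal x y)"
      by (auto simp: indicator_def intro: ennreal_leI)
  qed
  then show ?thesis
    by (simp add: proposal_integral)
qed

lemma mh_op_const_one: "mh (\<lambda>_. 1) x = 1"
  using diff_add_cancel_ennreal[OF acceptance_le_one[of x]]
  by (simp add: mh_op_def mh_rho_def add.commute)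

lemma proposal_op_const_one_le: "proposal_op (\<lambda>_. 1) x \<le> 1"
proof -
  have "proposal_op (\<lambda>_. 1) x \<le> (\<integral>\<^sup>+ y. ennreal (proposal x y) \<partial>lborel)"
    unfolding prop_op_def by (intro nn_integral_mono) (auto simp: indicator_def)
  then show ?thesis
    by (simp add: proposal_integral)
qed

lemma acceptance_le:
  assumes "x \<in> S" "0 < T"
  shows "acceptance x
    \<le> ennreal (T / \<pi> x) + (\<integral>\<^sup>+ u. ennreal (max 0 (q (norm u) - T)) \<partial>(lborel :: 'a measure))"
proof -
  have "acceptance x \<le> (\<integral>\<^sup>+ y. ennreal (T / \<pi> x) * (ennreal (\<pi> y) * indicator S y)
      + ennreal (max 0 (proposal x y - T)) \<partial>lborel)"
  proof (intro nn_integral_mono)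
    fix y
    show "ennreal (mh_alpha \<pi> proposal x y * proposal x y) * indicator S y
      \<le> ennreal (T / \<pi> x) * (ennreal (\<pi> y) * indicator S y) + ennreal (max 0 (proposal x y - T))"
    proof (cases "y \<in> S")
      case True
      have "mh_alpha \<pi> proposal x y * proposal x y \<le> T * (\<pi> y / \<pi> x) + max 0 (proposal x y - T)"
        using min_ratio_mult_le[of "\<pi> x" "\<pi> y" "proposal x y" T] pi_pos True assms q_nonneg
        by (simp add: mh_alpha_def norm_minus_commute)
      then have "ennreal (mh_alpha \<pi> proposal x y * proposal x y)
          \<le> ennreal (T / \<pi> x * \<pi> y + max 0 (proposal x y - T))"
        by (intro ennreal_leI) simp
      also have "\<dots> = ennreal (T / \<pi> x) * ennreal (\<pi> y) + ennreal (max 0 (proposal x y - T))"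
        using True pi_pos[of x] pi_pos[of y] assms
        by (subst ennreal_plus) (auto simp flip: ennreal_mult)
      finally show ?thesis
        using True by simp
    qed simp
  qed
  also have "\<dots> = ennreal (T / \<pi> x) * (\<integral>\<^sup>+ y. ennreal (\<pi> y) * indicator S y \<partial>lborel)
      + (\<integral>\<^sup>+ y. ennreal (max 0 (q (norm (y - x)) - T)) \<partial>lborel)"
    by (simp add: nn_integral_add nn_integral_cmult)
  also have "\<dots> = ennreal (T / \<pi> x) + (\<integral>\<^sup>+ u. ennreal (max 0 (q (norm u) - T)) \<partial>(lborel :: 'a measure))"
    using nn_integral_lborel_translate[of "\<lambda>u. ennreal (max 0 (q (norm u) - T))" x]
    by (simp add: pi_density)
  finally show ?thesis .
qed

lemma pi_bounded_where_acceptance_ge: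
  assumes "0 < c"
  shows "\<exists>M>0. \<forall>x\<in>S. ennreal c \<le> acceptance x \<longrightarrow> \<pi> x \<le> M"
proof -
  have "(\<integral>\<^sup>+ u. ennreal (q (norm u)) \<partial>(lborel :: 'a measure)) < \<infinity>"
    by (simp add: q_prob)
  then obtain T where "0 < T"
    and tail: "(\<integral>\<^sup>+ u. ennreal (max 0 (q (norm u) - T)) \<partial>(lborel :: 'a measure)) < ennreal (c / 2)"
    using nn_integral_excess_small[of "\<lambda>u. q (norm u)" lborel "ennreal (c / 2)"] assms by auto
  then obtain t where t: "(\<integral>\<^sup>+ u. ennreal (max 0 (q (norm u) - T)) \<partial>(lborel :: 'a measure)) = ennreal t"
    and "0 \<le> t" "t < c / 2"
    by (cases "\<integral>\<^sup>+ u. ennreal (max 0 (q (norm u) - T)) \<partial>(lborel :: 'a measure)")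
      (auto simp: ennreal_less_iff)
  have "\<pi> x \<le> 2 * T / c" if "x \<in> S" "ennreal c \<le> acceptance x" for x
  proof (rule ccontr)
    assume "\<not> \<pi> x \<le> 2 * T / c"
    then have "T / \<pi> x < c / 2"
      using pi_pos[OF \<open>x \<in> S\<close>] assms by (simp add: field_simps)
    then have "T / \<pi> x + t < c"
      using \<open>t < c / 2\<close> by linarith
    then have "ennreal (T / \<pi> x + t) < ennreal c"
      using assms by (intro ennreal_lessI)
    then have "ennreal (T / \<pi> x) + ennreal t < ennreal c"
      using \<open>0 < T\<close> \<open>0 \<le> t\<close> pi_pos[OF \<open>x \<in> S\<close>] by simp
    with acceptance_le[OF \<open>x \<in> S\<close> \<open>0 < T\<close>] t that(2) show False
      by simp
  qed
  moreover have "0 < 2 * T / c"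
    using \<open>0 < T\<close> assms by simp
  ultimately show ?thesis
    by blast
qed

lemma pi_bounded_off_drift_set:
  assumes drift: "\<And>x. x \<in> S \<Longrightarrow> mh f x \<le> ennreal l * f x + b * indicator C x"
    and "0 \<le> l" "l < 1"
    and f_pos: "\<And>x. x \<in> S \<Longrightarrow> 0 < f x" and f_finite: "\<And>x. x \<in> S \<Longrightarrow> f x < \<infinity>"
  shows "\<exists>M>0. \<forall>x\<in>S - C. \<pi> x \<le> M"
proof -
  have "ennreal (1 - l) \<le> acceptance x" if "x \<in> S" "x \<notin> C" for x
  proof -
    have "1 - acceptance x \<le> ennreal l"
      using mh_rho_le_of_drift[of S \<pi> proposal f x l] drift[OF \<open>x \<in> S\<close>] that f_pos f_finite
      by (simp add: mh_rho_def)
    moreover obtain A where A: "acceptance x = ennreal A" "0 \<le> A"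
      using acceptance_le_one[of x] by (cases "acceptance x") (auto simp: top_unique)
    ultimately have "1 - A \<le> l"
      using \<open>0 \<le> l\<close> ennreal_minus[of A 1] by simp
    with A show ?thesis
      by simp
  qed
  then show ?thesis
    using pi_bounded_where_acceptance_ge[of "1 - l"] \<open>l < 1\<close> by auto
qed

lemma powr_dominates_off_drift_set:
  assumes drift: "\<And>x. x \<in> S \<Longrightarrow> mh (\<lambda>y. ennreal (\<pi> y powr - s)) x
      \<le> ennreal l * ennreal (\<pi> x powr - s) + b * indicator C x"
    and "0 \<le> l" "l < 1" "0 < s" "0 \<le> c"
  shows "\<exists>k\<ge>0. \<forall>x\<in>S - C. c \<le> k * \<pi> x powr - s"
proof -
  have "\<exists>M>0. \<forall>x\<in>S - C. \<pi> x \<le> M"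
    by (rule pi_bounded_off_drift_set[OF drift]) (use assms pi_pos in force)+
  then obtain M where "0 < M" and M: "\<And>x. x \<in> S - C \<Longrightarrow> \<pi> x \<le> M"
    by blast
  have "c \<le> c * M powr s * \<pi> x powr - s" if "x \<in> S - C" for x
  proof -
    have "1 \<le> M powr s * \<pi> x powr - s"
      using M[OF that] that pi_pos[of x] \<open>0 < s\<close> by (simp add: powr_minus field_simps powr_mono2)
    then have "c * 1 \<le> c * (M powr s * \<pi> x powr - s)"
      using \<open>0 \<le> c\<close> by (rule mult_left_mono)
    then show ?thesis
      by (simp add: mult.assoc)
  qed
  with \<open>0 \<le> c\<close> show ?thesis
    by (intro exI[of _ "c * M powr s"]) auto
qed

lemma mh_drift_max_one:
  fixes f :: "'a \<Rightarrow> real" and k l b :: real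
  assumes [measurable]: "f \<in> borel_measurable borel" and f_nonneg: "\<And>y. 0 \<le> f y"
    and "0 \<le> k" "0 \<le> l" "l < 1" "0 \<le> b"
    and drift: "mh (\<lambda>y. ennreal (f y)) x \<le> ennreal l * ennreal (f x) + ennreal b * indicator C x"
    and large: "x \<notin> C \<Longrightarrow> 2 / (1 - l) \<le> k * f x"
  shows "mh (\<lambda>y. ennreal (max 1 (k * f y))) x
    \<le> ennreal ((1 + l) / 2) * ennreal (max 1 (k * f x)) + ennreal (1 + k * b) * indicator C x"
proof -
  have real_bound: "1 + k * (l * f x + b * indicator C x)
      \<le> (1 + l) / 2 * max 1 (k * f x) + (1 + k * b) * indicator C x"
  proof (cases "x \<in> C")
    case True
    have "k * (l * f x) = l * (k * f x)"
      by simp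
    also have "\<dots> \<le> (1 + l) / 2 * (k * f x)"
      using assms f_nonneg[of x] by (intro mult_right_mono) auto
    also have "\<dots> \<le> (1 + l) / 2 * max 1 (k * f x)"
      using assms by (intro mult_left_mono) auto
    finally show ?thesis
      using True by (simp add: algebra_simps)
  next
    case False
    have "1 \<le> (1 - l) / 2 * (k * f x)"
      using large[OF False] \<open>l < 1\<close> by (simp add: field_simps)
    then have "1 + k * (l * f x) \<le> (1 + l) / 2 * (k * f x)"
      by (simp add: algebra_simps)
    also have "\<dots> \<le> (1 + l) / 2 * max 1 (k * f x)"
      using assms by (intro mult_left_mono) auto
    finally show ?thesis
      using False by simp
  qed
  have "mh (\<lambda>y. ennreal (max 1 (k * f y))) x \<le> mh (\<lambda>y. 1 + ennreal k * ennreal (f y)) x"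
    using \<open>0 \<le> k\<close> f_nonneg by (intro mh_op_mono ennreal_max_one_le)
  also have "\<dots> = 1 + ennreal k * mh (\<lambda>y. ennreal (f y)) x"
    by (subst mh_op_add_cmult) (simp_all add: mh_op_const_one)
  also have "\<dots> \<le> 1 + ennreal k * (ennreal l * ennreal (f x) + ennreal b * indicator C x)"
    using drift by (intro add_mono mult_left_mono) auto
  also have "\<dots> = ennreal (1 + k * (l * f x + b * indicator C x))"
    using assms f_nonneg[of x] by (cases "x \<in> C") (simp_all add: ennreal_mult distrib_left)
  also have "\<dots> \<le> ennreal ((1 + l) / 2 * max 1 (k * f x) + (1 + k * b) * indicator C x)"
    using real_bound by (rule ennreal_leI)
  also have "\<dots> = ennreal ((1 + l) / 2) * ennreal (max 1 (k * f x)) + ennreal (1 + k * b) * indicator C x"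
  proof -
    have "0 \<le> (1 + l) / 2" "0 \<le> 1 + k * b"
      "0 \<le> (1 + l) / 2 * max 1 (k * f x)" "0 \<le> (1 + k * b) * indicator C x"
      using assms by auto
    then show ?thesis
      by (simp only: ennreal_plus ennreal_mult' ennreal_indicator)
  qed
  finally show ?thesis .
qed

lemma proposal_op_max_one_le:
  fixes g :: "'a \<Rightarrow> real" and k E :: real
  assumes [measurable]: "g \<in> borel_measurable borel" and g_nonneg: "\<And>y. 0 \<le> g y"
    and "0 \<le> k" "0 \<le> E"
    and bound: "proposal_op (\<lambda>y. ennreal (g y)) x \<le> ennreal E * ennreal (g x)"
  shows "proposal_op (\<lambda>y. ennreal (max 1 (k * g y))) x \<le> ennreal (1 + E) * ennreal (max 1 (k * g x))"
proof -
  have "proposal_op (\<lambda>y. ennreal (max 1 (k * g y))) x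
      \<le> proposal_op (\<lambda>y. 1 + ennreal k * ennreal (g y)) x"
    using \<open>0 \<le> k\<close> g_nonneg by (intro prop_op_mono ennreal_max_one_le)
  also have "\<dots> = proposal_op (\<lambda>_. 1) x + ennreal k * proposal_op (\<lambda>y. ennreal (g y)) x"
    by (subst prop_op_add_cmult) simp_all
  also have "\<dots> \<le> 1 + ennreal k * (ennreal E * ennreal (g x))"
    using bound by (intro add_mono mult_left_mono proposal_op_const_one_le) auto
  also have "\<dots> = ennreal (1 + k * (E * g x))"
    using assms g_nonneg[of x] by (simp add: ennreal_mult)
  also have "\<dots> \<le> ennreal ((1 + E) * max 1 (k * g x))"
  proof (rule ennreal_leI)
    have "1 + E * (k * g x) \<le> max 1 (k * g x) + E * max 1 (k * g x)"
      using \<open>0 \<le> E\<close> by (intro add_mono mult_left_mono) auto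
    then show "1 + k * (E * g x) \<le> (1 + E) * max 1 (k * g x)"
      by (simp add: algebra_simps)
  qed
  also have "\<dots> = ennreal (1 + E) * ennreal (max 1 (k * g x))"
    using assms by (simp add: ennreal_mult')
  finally show ?thesis .
qed

lemma proposal_op_powr_le:
  assumes log_lip: "\<And>x z. x \<in> S \<Longrightarrow> z \<in> S \<Longrightarrow> \<bar>ln (\<pi> z) - ln (\<pi> x)\<bar> \<le> L * norm (z - x)"
    and "0 \<le> s" "s * L \<le> a" "x \<in> S"
  shows "proposal_op (\<lambda>y. ennreal (\<pi> y powr - s)) x
    \<le> (\<integral>\<^sup>+ u. ennreal (exp (a * norm u) * q (norm u)) \<partial>(lborel :: 'a measure)) * ennreal (\<pi> x powr - s)"
proof -
  have "proposal_op (\<lambda>y. ennreal (\<pi> y powr - s)) x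
      \<le> (\<integral>\<^sup>+ y. ennreal (\<pi> x powr - s) * ennreal (exp (a * norm (y - x)) * q (norm (y - x))) \<partial>lborel)"
    unfolding prop_op_def
  proof (intro nn_integral_mono)
    fix y
    show "ennreal (proposal x y) * ennreal (\<pi> y powr - s) * indicator S y
      \<le> ennreal (\<pi> x powr - s) * ennreal (exp (a * norm (y - x)) * proposal x y)"
    proof (cases "y \<in> S")
      case True
      have "\<pi> y powr - s \<le> \<pi> x powr - s * exp (s * (L * norm (y - x)))"
        using log_lip[OF True \<open>x \<in> S\<close>] pi_pos[OF True] pi_pos[OF \<open>x \<in> S\<close>] \<open>0 \<le> s\<close>
        by (intro powr_neg_le_of_ln_diff_le) (auto simp: norm_minus_commute)
      also have "\<dots> \<le> \<pi> x powr - s * exp (a * norm (y - x))"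
        using mult_right_mono[OF \<open>s * L \<le> a\<close> norm_ge_zero[of "y - x"]]
        by (intro mult_left_mono) (auto simp: mult.assoc)
      finally have "proposal x y * \<pi> y powr - s \<le> proposal x y * (\<pi> x powr - s * exp (a * norm (y - x)))"
        using q_nonneg by (rule mult_left_mono)
      then show ?thesis
        using True q_nonneg by (simp add: ac_simps flip: ennreal_mult)
    qed simp
  qed
  also have "\<dots> = ennreal (\<pi> x powr - s)
      * (\<integral>\<^sup>+ y. ennreal (exp (a * norm (y - x)) * q (norm (y - x))) \<partial>lborel)"
    by (rule nn_integral_cmult) measurable
  also have "(\<integral>\<^sup>+ y. ennreal (exp (a * norm (y - x)) * q (norm (y - x))) \<partial>lborel)
      = (\<integral>\<^sup>+ u. ennreal (exp (a * norm u) * q (norm u)) \<partial>(lborel :: 'a measure))"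
    by (rule nn_integral_lborel_translate[of "\<lambda>u. ennreal (exp (a * norm u) * q (norm u))"]) measurable
  finally show ?thesis
    by (simp add: mult.commute)
qed

end

theorem proposition3p8:
  fixes S :: "'a::euclidean_space set"
    and \<pi> :: "'a \<Rightarrow> real"
    and q :: "real \<Rightarrow> real"
    and Q :: "'a \<Rightarrow> nat \<Rightarrow> real measure"
    and L a :: real
  assumes S_meas: "S \<in> sets lborel"
    and pi_meas: "\<pi> \<in> borel_measurable lborel"
    and pi_pos: "\<forall>x\<in>S. \<pi> x > 0"
    and pi_density: "(\<integral>\<^sup>+ x. ennreal (\<pi> x) * indicator S x \<partial>lborel) = 1"
    and L_pos: "L > 0"
    and log_lip: "\<forall>x\<in>S. \<forall>z\<in>S. \<bar>ln (\<pi> z) - ln (\<pi> x)\<bar> \<le> L * norm (z - x)"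
    and drift_all: "\<forall>s\<in>{0<..<1::real}. \<exists>C lam b. mh_small S \<pi> (\<lambda>x y. q (norm (y - x))) C
        \<and> lam < (1::ennreal) \<and> b < (\<top>::ennreal)
        \<and> (\<forall>x\<in>S. mh_op S \<pi> (\<lambda>x y. q (norm (y - x))) (\<lambda>y. ennreal (\<pi> y powr (- s))) x
               \<le> lam * ennreal (\<pi> x powr (- s)) + b * indicator C x)"
    and q_nonneg: "\<forall>r. q r \<ge> 0"
    and q_meas: "q \<in> borel_measurable borel"
    and q_prob: "(\<integral>\<^sup>+ u. ennreal (q (norm u)) \<partial>(lborel :: 'a measure)) = 1"
    and a_pos: "a > 0"
    and q_expmom: "(\<integral>\<^sup>+ u. ennreal (exp (a * norm u) * q (norm u)) \<partial>(lborel :: 'a measure)) < \<top>"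
    and Q_prob: "\<forall>x\<in>S. \<forall>N\<ge>1. prob_space (Q x N) \<and> sets (Q x N) = sets borel
        \<and> (AE w in Q x N. w > 0) \<and> integrable (Q x N) (\<lambda>w. w) \<and> (\<integral>w. w \<partial>(Q x N)) = 1"
    and W1: "\<forall>\<delta>>0. (\<lambda>N. SUP x\<in>S. measure (Q x N) {w. \<bar>w - 1\<bar> \<ge> \<delta>}) \<longlonglongrightarrow> 0"
  shows "\<exists>V :: 'a \<Rightarrow> real. (\<forall>x\<in>S. V x \<ge> 1) \<and>
    (\<exists>C lam b K. mh_small S \<pi> (\<lambda>x y. q (norm (y - x))) C
        \<and> lam < (1::ennreal) \<and> b < (\<top>::ennreal) \<and> K < (\<top>::ennreal)
        \<and> (\<forall>x\<in>S. mh_op S \<pi> (\<lambda>x y. q (norm (y - x))) (\<lambda>y. ennreal (V y)) x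
               \<le> lam * ennreal (V x) + b * indicator C x)
        \<and> (\<forall>x\<in>S. prop_op S (\<lambda>x y. q (norm (y - x))) (\<lambda>y. ennreal (V y)) x \<le> K * ennreal (V x)))"
proof -
  interpret random_walk_mh S \<pi> q
    using S_meas pi_meas pi_pos pi_density q_nonneg q_meas q_prob by unfold_locales auto
  define s where "s = min (1 / 2) (a / L)"
  have "0 < s" "s < 1" "s * L \<le> a"
    using a_pos L_pos by (auto simp: s_def min_def field_simps)
  then obtain C lam b where small: "mh_small S \<pi> proposal C" and "lam < 1" "b < \<top>"
    and drift: "\<And>x. x \<in> S \<Longrightarrow> mh (\<lambda>y. ennreal (\<pi> y powr - s)) x
      \<le> lam * ennreal (\<pi> x powr - s) + b * indicator C x"
    using drift_all by fastforce
  obtain l \<beta> where lam: "lam = ennreal l" "0 \<le> l" "l < 1" and b: "b = ennreal \<beta>" "0 \<le> \<beta>"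
    using \<open>lam < 1\<close> \<open>b < \<top>\<close> by (cases lam; cases b) (auto simp: ennreal_less_iff)
  have drift_l: "\<And>x. x \<in> S \<Longrightarrow> mh (\<lambda>y. ennreal (\<pi> y powr - s)) x
      \<le> ennreal l * ennreal (\<pi> x powr - s) + ennreal \<beta> * indicator C x"
    using drift lam b by simp
  obtain k where "0 \<le> k" and large: "\<And>x. x \<in> S - C \<Longrightarrow> 2 / (1 - l) \<le> k * \<pi> x powr - s"
    using powr_dominates_off_drift_set[OF drift_l, of "2 / (1 - l)"] lam \<open>0 < s\<close> by auto
  obtain E where E: "(\<integral>\<^sup>+ u. ennreal (exp (a * norm u) * q (norm u)) \<partial>(lborel :: 'a measure)) = ennreal E"
    "0 \<le> E"
    using q_expmom by (cases "\<integral>\<^sup>+ u. ennreal (exp (a * norm u) * q (norm u)) \<partial>(lborel :: 'a measure)") auto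
  show ?thesis
  proof (intro exI conjI ballI)
    let ?V = "\<lambda>y. max 1 (k * \<pi> y powr - s)"
    show "mh_small S \<pi> proposal C" "ennreal ((1 + l) / 2) < 1" "ennreal (1 + k * \<beta>) < \<top>"
      "ennreal (1 + E) < \<top>"
      using small lam by (auto simp: ennreal_less_iff)
    fix x assume "x \<in> S"
    show "1 \<le> ?V x"
      by simp
    show "mh (\<lambda>y. ennreal (?V y)) x
      \<le> ennreal ((1 + l) / 2) * ennreal (?V x) + ennreal (1 + k * \<beta>) * indicator C x"
      using drift_l[OF \<open>x \<in> S\<close>] large \<open>x \<in> S\<close> lam b \<open>0 \<le> k\<close>
      by (intro mh_drift_max_one) auto
    show "proposal_op (\<lambda>y. ennreal (?V y)) x \<le> ennreal (1 + E) * ennreal (?V x)"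
      using proposal_op_powr_le[OF _ _ \<open>s * L \<le> a\<close> \<open>x \<in> S\<close>] log_lip \<open>0 < s\<close> E \<open>0 \<le> k\<close>
      by (intro proposal_op_max_one_le) auto
  qed
qed

end
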